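(* Let $r\in[0,1]$ and let $a\in A$ be such that the pure state $\delta_a$ (all mass on $a$) is stationary under the recombinator dynamics with recombination rate $r$. Suppose: (1) $u(a,a)>u((a'_d,a_{-d}),a)$ for every dimension $d\in D$ and every trait $a'_d\in A_d$ with $a'_d\ne a_d$; and (2) $u(a,a)>(1-r)\,u(a',a)$ for every type $a'\in A$ with $a'\ne a$. Then $\delta_a$ is asymptotically stable under the recombinator dynamics with recombination rate $r$.
   Context: Setting: $D=\{1,\dots,|D|\}$ finite, $|D|\ge2$; finite trait sets $A_d$; types $A=\prod_dA_d$, $a=(a_d,a_{-d})$ with $a_{-d}\in\prod_{d'\ne d}A_{d'}$. Payoff $u:A\times A\to\mathbb{R}_{>0}$, $u(a,a')$ being the payoff of type $a$ against type $a'$. For a state $x\in\Delta(A)$: $u_x(a)=\sum_{a'}x(a')u(a,a')$, $u_x=\sum_ax(a)u_x(a)$, $x(a_d)=\sum_{a_{-d}}x(a_d,a_{-d})$, and for $x(a_d)>0$, $u_x(a_d)=\frac1{x(a_d)}\sum_{a_{-d}}x(a_d,a_{-d})u_x(a_d,a_{-d})$ (with $x(a_d)u_x(a_d):=\sum_{a_{-d}}x(a_d,a_{-d})u_x(a_d,a_{-d})$). Recombinator dynamics with rate $r$: $\dot x(a)=(1-r)\frac{x(a)u_x(a)}{u_x}+r\prod_{a_d\in a}\frac{x(a_d)u_x(a_d)}{u_x}-x(a)$. A state is stationary if $\dot x=0$ there. A state $x^*$ is asymptotically stable if it is Lyapunov stable (for every neighbourhood $U$ of $x^*$ there is a neighbourhood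 $V\subseteq U$ with $x^0\in V\Rightarrow x^t\in U$ for all $t>0$) and there is an open neighbourhood $U$ of $x^*$ with $x^0\in U\Rightarrow \lim_{t\to\infty}x^t=x^*$. *)

theory Defs
  imports "HOL-Analysis.Analysis"
begin

text \<open>Dimensions D are the finite type 'd; traits live in a finite type 'b and the
trait set of dimension d is Ad d.\<close>

definition types :: "('d \<Rightarrow> 'b set) \<Rightarrow> ('d \<Rightarrow> 'b) set" where
  "types Ad = {a. \<forall>d. a d \<in> Ad d}"

definition state_space :: "('d \<Rightarrow> 'b set) \<Rightarrow> (real ^ ('d::finite \<Rightarrow> 'b::finite)) set" where
  "state_space Ad = {x. (\<forall>a. 0 \<le> x $ a) \<and> (\<forall>a. a \<notin> types Ad \<longrightarrow> x $ a = 0)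
                    \<and> (\<Sum>a\<in>types Ad. x $ a) = 1}"

definition pure_state :: "('d::finite \<Rightarrow> 'b::finite) \<Rightarrow> real ^ ('d \<Rightarrow> 'b)" where
  "pure_state a = (\<chi> b. if b = a then 1 else 0)"

definition payoff_vs :: "('d \<Rightarrow> 'b set) \<Rightarrow> (('d \<Rightarrow> 'b) \<Rightarrow> ('d \<Rightarrow> 'b) \<Rightarrow> real)
    \<Rightarrow> real ^ ('d::finite \<Rightarrow> 'b::finite) \<Rightarrow> ('d \<Rightarrow> 'b) \<Rightarrow> real" where
  "payoff_vs Ad u x a = (\<Sum>a'\<in>types Ad. x $ a' * u a a')"

definition mean_payoff :: "('d \<Rightarrow> 'b set) \<Rightarrow> (('d \<Rightarrow> 'b) \<Rightarrow> ('d \<Rightarrow> 'b) \<Rightarrow> real)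
    \<Rightarrow> real ^ ('d::finite \<Rightarrow> 'b::finite) \<Rightarrow> real" where
  "mean_payoff Ad u x = (\<Sum>a\<in>types Ad. x $ a * payoff_vs Ad u x a)"

text \<open>x(a_d) u_x(a_d) = sum over a_{-d} of x(a_d,a_{-d}) u_x(a_d,a_{-d})\<close>
definition trait_mass_payoff :: "('d \<Rightarrow> 'b set) \<Rightarrow> (('d \<Rightarrow> 'b) \<Rightarrow> ('d \<Rightarrow> 'b) \<Rightarrow> real)
    \<Rightarrow> real ^ ('d::finite \<Rightarrow> 'b::finite) \<Rightarrow> 'd \<Rightarrow> 'b \<Rightarrow> real" where
  "trait_mass_payoff Ad u x d t = (\<Sum>a\<in>{a\<in>types Ad. a d = t}. x $ a * payoff_vs Ad u x a)"

definition recomb_field :: "('d \<Rightarrow> 'b set) \<Rightarrow> (('d \<Rightarrow> 'b) \<Rightarrow> ('d \<Rightarrow> 'b) \<Rightarrow> real) \<Rightarrow> real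
    \<Rightarrow> real ^ ('d::finite \<Rightarrow> 'b::finite) \<Rightarrow> real ^ ('d \<Rightarrow> 'b)" where
  "recomb_field Ad u r x = (\<chi> a.
      (1 - r) * (x $ a * payoff_vs Ad u x a) / mean_payoff Ad u x
      + r * (\<Prod>d\<in>UNIV. trait_mass_payoff Ad u x d (a d) / mean_payoff Ad u x)
      - x $ a)"

definition stationary :: "('d \<Rightarrow> 'b set) \<Rightarrow> (('d \<Rightarrow> 'b) \<Rightarrow> ('d \<Rightarrow> 'b) \<Rightarrow> real) \<Rightarrow> real
    \<Rightarrow> real ^ ('d::finite \<Rightarrow> 'b::finite) \<Rightarrow> bool" where
  "stationary Ad u r x \<longleftrightarrow> recomb_field Ad u r x = 0"

definition trajectory :: "('d \<Rightarrow> 'b set) \<Rightarrow> (('d \<Rightarrow> 'b) \<Rightarrow> ('d \<Rightarrow> 'b) \<Rightarrow> real) \<Rightarrow> real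
    \<Rightarrow> (real \<Rightarrow> real ^ ('d::finite \<Rightarrow> 'b::finite)) \<Rightarrow> bool" where
  "trajectory Ad u r X \<longleftrightarrow> (\<forall>t\<ge>0. X t \<in> state_space Ad \<and>
      (X has_vector_derivative recomb_field Ad u r (X t)) (at t within {0..}))"

definition lyapunov_stable :: "('d \<Rightarrow> 'b set) \<Rightarrow> (('d \<Rightarrow> 'b) \<Rightarrow> ('d \<Rightarrow> 'b) \<Rightarrow> real) \<Rightarrow> real
    \<Rightarrow> real ^ ('d::finite \<Rightarrow> 'b::finite) \<Rightarrow> bool" where
  "lyapunov_stable Ad u r xs \<longleftrightarrow>
     (\<forall>U. open U \<and> xs \<in> U \<longrightarrow>
        (\<exists>V. open V \<and> xs \<in> V \<and> V \<subseteq> U \<and>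
           (\<forall>X. trajectory Ad u r X \<and> X 0 \<in> V \<longrightarrow> (\<forall>t>0. X t \<in> U))))"

definition asymptotically_stable :: "('d \<Rightarrow> 'b set) \<Rightarrow> (('d \<Rightarrow> 'b) \<Rightarrow> ('d \<Rightarrow> 'b) \<Rightarrow> real) \<Rightarrow> real
    \<Rightarrow> real ^ ('d::finite \<Rightarrow> 'b::finite) \<Rightarrow> bool" where
  "asymptotically_stable Ad u r xs \<longleftrightarrow> lyapunov_stable Ad u r xs \<and>
     (\<exists>U. open U \<and> xs \<in> U \<and>
        (\<forall>X. trajectory Ad u r X \<and> X 0 \<in> U \<longrightarrow> (X \<longlongrightarrow> xs) at_top))"

end

theory Submission
  imports Defs "HOL-Real_Asymp.Real_Asymp"
begin

text \<open>Near \<open>\<delta>\<^sub>a\<close> split the mass off \<open>a\<close> into the mass \<open>y\<^sub>1\<close> of single mutants (types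
  differing from \<open>a\<close> in one trait) and the mass \<open>y\<^sub>2\<close> of multi-trait mutants. By condition (1)
  single mutants lose against \<open>a\<close> under selection, and recombination creates them only from
  multi-trait mutants, at rate \<open>O(y\<^sub>2)\<close>. By condition (2) the non-recombining offspring of a
  multi-trait mutant loses against \<open>a\<close>, and recombination creates multi-trait mutants only by
  combining two foreign traits, at rate \<open>O((y\<^sub>1 + y\<^sub>2)\<^sup>2)\<close>. Hence the linear function
  \<open>V = y\<^sub>1 + M y\<^sub>2\<close> with \<open>M\<close> large satisfies \<open>V' \<le> -\<eta> V\<close> near \<open>\<delta>\<^sub>a\<close>, so it decays
  exponentially along trajectories starting there; as \<open>V\<close> is comparable to the distance to
  \<open>\<delta>\<^sub>a\<close>, this is asymptotic stability.\<close>

section \<open>Exponentially decaying Lyapunov functions\<close>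

lemma weighted_decreasing_on_interval:
  fixes f f' :: "real \<Rightarrow> real"
  assumes deriv: "\<And>s. 0 \<le> s \<Longrightarrow> (f has_real_derivative f' s) (at s within {0..})"
    and decay: "\<And>s. 0 < s \<Longrightarrow> s < t \<Longrightarrow> f' s \<le> - \<eta> * f s"
    and "0 \<le> t"
  shows "f t * exp (\<eta> * t) \<le> f 0"
proof -
  define h where "h = (\<lambda>s. f s * exp (\<eta> * s))"
  define h' where "h' s = (f' s + \<eta> * f s) * exp (\<eta> * s)" for s
  have h_deriv: "(h has_real_derivative h' s) (at s within {0..})" if "0 \<le> s" for s
  proof -
    have "((\<lambda>s. exp (\<eta> * s)) has_real_derivative exp (\<eta> * s) * \<eta>) (at s within {0..})"
      by (auto intro!: derivative_eq_intros)
    from DERIV_mult'[OF deriv[OF that] this] show ?thesis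
      by (simp add: h_def h'_def algebra_simps)
  qed
  have "continuous_on {0..} h"
    unfolding continuous_on_eq_continuous_within using h_deriv by (auto intro: DERIV_continuous)
  then have cont: "continuous_on {0..t} h"
    by (rule continuous_on_subset) auto
  have "h t \<le> h 0"
  proof (rule DERIV_nonpos_imp_decreasing_open[OF \<open>0 \<le> t\<close> _ cont])
    fix s assume s: "0 < s" "s < t"
    have "at s within {0..} = at s"
      using s by (intro at_within_interior) auto
    then have "(h has_real_derivative h' s) (at s)"
      using h_deriv[of s] s by simp
    moreover have "h' s \<le> 0"
      using decay[OF s] by (simp add: h'_def mult_nonpos_nonneg)
    ultimately show "\<exists>y. (h has_real_derivative y) (at s) \<and> y \<le> 0" by blast
  qed
  then show ?thesis by (simp add: h_def)
qed

text \<open>At the first time \<open>f\<close> would reach \<open>c\<close>, the decay estimate on the preceding interval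
  already bounds it by \<open>f 0 < c\<close>.\<close>
lemma exponential_decay_below_threshold:
  fixes f f' :: "real \<Rightarrow> real"
  assumes deriv: "\<And>s. 0 \<le> s \<Longrightarrow> (f has_real_derivative f' s) (at s within {0..})"
    and nonneg: "\<And>s. 0 \<le> s \<Longrightarrow> 0 \<le> f s"
    and decay: "\<And>s. 0 \<le> s \<Longrightarrow> f s < c \<Longrightarrow> f' s \<le> - \<eta> * f s"
    and "0 \<le> \<eta>" "f 0 < c" "0 \<le> t"
  shows "f t \<le> f 0 * exp (- \<eta> * t)"
proof -
  have below: "f s < c" if "0 \<le> s" for s
  proof (rule ccontr)
    assume "\<not> f s < c"
    define E where "E = {0..} \<inter> f -` {c..}"
    have "continuous_on {0..} f"
      unfolding continuous_on_eq_continuous_within using deriv by (auto intro: DERIV_continuous)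
    then have "closed E"
      unfolding E_def by (rule continuous_closed_preimage) auto
    moreover have "s \<in> E" "bdd_below E"
      using \<open>\<not> f s < c\<close> \<open>0 \<le> s\<close> by (auto simp: E_def intro: bdd_belowI[of _ 0])
    ultimately have "Inf E \<in> E"
      using closed_contains_Inf by blast
    then have s0: "0 \<le> Inf E" "c \<le> f (Inf E)"
      by (auto simp: E_def)
    have "f s' < c" if "0 \<le> s'" "s' < Inf E" for s'
      using that cInf_lower[OF _ \<open>bdd_below E\<close>, of s'] by (force simp: E_def)
    then have "f (Inf E) * exp (\<eta> * Inf E) \<le> f 0"
      using decay by (intro weighted_decreasing_on_interval[OF deriv _ s0(1)]) auto
    moreover have "f (Inf E) \<le> f (Inf E) * exp (\<eta> * Inf E)"
      using nonneg[OF s0(1)] \<open>0 \<le> \<eta>\<close> s0(1) by (simp add: mult_le_cancel_left1)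
    ultimately show False
      using s0 \<open>f 0 < c\<close> by linarith
  qed
  have "f t * exp (\<eta> * t) \<le> f 0"
    using below decay by (intro weighted_decreasing_on_interval[OF deriv _ \<open>0 \<le> t\<close>]) auto
  then show ?thesis
    by (simp add: exp_minus field_simps)
qed

locale exponential_lyapunov_function =
  fixes Ad :: "'d::finite \<Rightarrow> 'b::finite set" and u :: "('d \<Rightarrow> 'b) \<Rightarrow> ('d \<Rightarrow> 'b) \<Rightarrow> real"
    and r :: real and p :: "real ^ ('d \<Rightarrow> 'b)" and W :: "real ^ ('d \<Rightarrow> 'b) \<Rightarrow> real"
    and C c \<eta> :: real
  assumes W_dist: "\<And>x. x \<in> state_space Ad \<Longrightarrow> dist x p \<le> C * W x \<and> W x \<le> C * dist x p"
    and W_decay: "\<And>X t. trajectory Ad u r X \<Longrightarrow> W (X 0) < c \<Longrightarrow> 0 \<le> t \<Longrightarrow>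
                  W (X t) \<le> W (X 0) * exp (- \<eta> * t)"
    and C_ge_1: "1 \<le> C" and c_pos: "0 < c" and \<eta>_pos: "0 < \<eta>"
begin

lemma trajectory_dist_less:
  assumes X: "trajectory Ad u r X" and start: "dist (X 0) p < \<rho>" "C * \<rho> \<le> c" and "0 \<le> t"
  shows "dist (X t) p < C * C * \<rho> * exp (- \<eta> * t)"
proof -
  have "W (X 0) \<le> C * dist (X 0) p"
    using W_dist X by (auto simp: trajectory_def)
  also have "\<dots> < C * \<rho>"
    using start(1) C_ge_1 by simp
  finally have W_0: "W (X 0) < C * \<rho>" .
  have "dist (X t) p \<le> C * W (X t)"
    using W_dist X \<open>0 \<le> t\<close> by (auto simp: trajectory_def)
  also have "\<dots> \<le> C * (W (X 0) * exp (- \<eta> * t))"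
    using W_decay[OF X _ \<open>0 \<le> t\<close>] W_0 start(2) C_ge_1 by (intro mult_left_mono) auto
  also have "\<dots> < C * (C * \<rho> * exp (- \<eta> * t))"
    using W_0 C_ge_1 by simp
  finally show ?thesis
    by (simp add: mult.assoc)
qed

lemma lyapunov_stable: "lyapunov_stable Ad u r p"
  unfolding lyapunov_stable_def
proof (intro allI impI)
  fix U assume "open U \<and> p \<in> U"
  then obtain \<epsilon> where "0 < \<epsilon>" "ball p \<epsilon> \<subseteq> U"
    by (meson openE)
  define \<rho> where "\<rho> = min (c / C) (\<epsilon> / (C * C))"
  have "1 * 1 \<le> C * C"
    using C_ge_1 by (intro mult_mono) auto
  then have C2: "1 \<le> C * C"
    by simp
  have "0 < \<rho>"
    using \<open>0 < \<epsilon>\<close> c_pos C_ge_1 by (simp add: \<rho>_def)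
  have "\<rho> \<le> c / C" "\<rho> \<le> \<epsilon> / (C * C)"
    by (simp_all add: \<rho>_def)
  then have "C * \<rho> \<le> c" "C * C * \<rho> \<le> \<epsilon>"
    using C_ge_1 C2 by (simp_all add: pos_le_divide_eq mult.commute)
  moreover have "\<rho> \<le> C * C * \<rho>"
    using C2 \<open>0 < \<rho>\<close> by (simp add: mult_le_cancel_right1)
  ultimately have "\<rho> \<le> \<epsilon>"
    by linarith
  moreover have "X t \<in> U" if "trajectory Ad u r X" "dist (X 0) p < \<rho>" "0 < t" for X t
  proof -
    have "dist (X t) p < C * C * \<rho> * exp (- \<eta> * t)"
      using trajectory_dist_less that \<open>C * \<rho> \<le> c\<close> by simp
    also have "\<dots> \<le> C * C * \<rho>"
      using \<open>0 < \<rho>\<close> C2 \<eta>_pos that(3) by (intro mult_left_le) auto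
    finally show ?thesis
      using \<open>C * C * \<rho> \<le> \<epsilon>\<close> \<open>ball p \<epsilon> \<subseteq> U\<close> by (auto simp: dist_commute)
  qed
  ultimately show "\<exists>V. open V \<and> p \<in> V \<and> V \<subseteq> U \<and>
      (\<forall>X. trajectory Ad u r X \<and> X 0 \<in> V \<longrightarrow> (\<forall>t>0. X t \<in> U))"
    using \<open>ball p \<epsilon> \<subseteq> U\<close> \<open>0 < \<rho>\<close>
    by (intro exI[of _ "ball p \<rho>"]) (auto simp: dist_commute)
qed

lemma asymptotically_stable: "asymptotically_stable Ad u r p"
proof -
  have "(X \<longlongrightarrow> p) at_top" if X: "trajectory Ad u r X" "dist (X 0) p < c / C" for X
  proof -
    have "((\<lambda>t. C * C * (c / C) * exp (- \<eta> * t)) \<longlongrightarrow> 0) at_top"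
      using \<eta>_pos by real_asymp
    then have "((\<lambda>t. dist (X t) p) \<longlongrightarrow> 0) at_top"
      by (rule tendsto_sandwich[rotated 2, OF tendsto_const])
        (use trajectory_dist_less[OF X] C_ge_1 in \<open>auto intro: eventually_at_top_linorderI[of 0] less_imp_le\<close>)
    then show ?thesis
      using tendsto_dist_iff by blast
  qed
  then show ?thesis
    unfolding asymptotically_stable_def using lyapunov_stable c_pos C_ge_1
    by (intro conjI exI[of _ "ball p (c / C)"]) (auto simp: dist_commute)
qed

end

section \<open>The state space near a pure state\<close>

definition off_mass :: "('d \<Rightarrow> 'b set) \<Rightarrow> ('d \<Rightarrow> 'b) \<Rightarrow> real ^ ('d::finite \<Rightarrow> 'b::finite) \<Rightarrow> real" where
  "off_mass Ad a x = (\<Sum>b\<in>types Ad - {a}. x $ b)"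

lemma finite_types [simp]: "finite (types (Ad :: 'd::finite \<Rightarrow> 'b::finite set))"
  by simp

lemma state_spaceD:
  assumes "x \<in> state_space Ad"
  shows "0 \<le> x $ b" and "b \<notin> types Ad \<Longrightarrow> x $ b = 0" and "(\<Sum>b\<in>types Ad. x $ b) = 1"
  using assms by (auto simp: state_space_def)

lemma state_space_average_le:
  assumes "x \<in> state_space Ad" and "\<And>b. b \<in> types Ad \<Longrightarrow> f b \<le> M"
  shows "(\<Sum>b\<in>types Ad. x $ b * f b) \<le> M"
proof -
  have "(\<Sum>b\<in>types Ad. x $ b * f b) \<le> (\<Sum>b\<in>types Ad. x $ b * M)"
    using assms by (intro sum_mono mult_left_mono) (auto dest: state_spaceD)
  also have "\<dots> = M"
    using state_spaceD(3)[OF assms(1)] by (simp add: sum_distrib_right[symmetric])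
  finally show ?thesis .
qed

lemma state_space_average_ge:
  assumes "x \<in> state_space Ad" and "\<And>b. b \<in> types Ad \<Longrightarrow> M \<le> f b"
  shows "M \<le> (\<Sum>b\<in>types Ad. x $ b * f b)"
proof -
  have "M = (\<Sum>b\<in>types Ad. x $ b * M)"
    using state_spaceD(3)[OF assms(1)] by (simp add: sum_distrib_right[symmetric])
  also have "\<dots> \<le> (\<Sum>b\<in>types Ad. x $ b * f b)"
    using assms by (intro sum_mono mult_left_mono) (auto dest: state_spaceD)
  finally show ?thesis .
qed

lemma off_mass_nonneg: "x \<in> state_space Ad \<Longrightarrow> 0 \<le> off_mass Ad a x"
  unfolding off_mass_def by (intro sum_nonneg) (auto dest: state_spaceD)

lemma state_space_mass_at:
  assumes "x \<in> state_space Ad" "a \<in> types Ad"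
  shows "x $ a = 1 - off_mass Ad a x"
  using state_spaceD(3)[OF assms(1)] sum.remove[of "types Ad" a "\<lambda>b. x $ b"] assms(2)
  by (simp add: off_mass_def)

lemma abs_diff_pure_state_nth:
  assumes "x \<in> state_space Ad" "a \<in> types Ad"
  shows "\<bar>x $ b - pure_state a $ b\<bar> = (if b = a then off_mass Ad a x else x $ b)"
  using assms off_mass_nonneg[OF assms(1)] state_spaceD(1)[OF assms(1)]
  by (simp add: state_space_mass_at pure_state_def)

lemma off_mass_le_dist_pure_state:
  assumes "x \<in> state_space Ad" "a \<in> types Ad"
  shows "off_mass Ad a x \<le> dist x (pure_state a)"
  using component_le_norm_cart[of "x - pure_state a" a]
  by (simp add: dist_norm abs_diff_pure_state_nth[OF assms])

lemma dist_pure_state_le_off_mass: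
  assumes "x \<in> state_space Ad" "a \<in> types Ad"
  shows "dist x (pure_state a) \<le> 2 * off_mass Ad a x"
proof -
  have "dist x (pure_state a) \<le> (\<Sum>b\<in>UNIV. \<bar>(x - pure_state a) $ b\<bar>)"
    unfolding dist_norm by (rule norm_le_l1_cart)
  also have "\<dots> = (\<Sum>b\<in>types Ad. \<bar>(x - pure_state a) $ b\<bar>)"
    using assms by (intro sum.mono_neutral_right) (auto simp: pure_state_def dest: state_spaceD)
  also have "\<dots> = \<bar>(x - pure_state a) $ a\<bar> + (\<Sum>b\<in>types Ad - {a}. \<bar>(x - pure_state a) $ b\<bar>)"
    using assms(2) by (simp add: sum.remove)
  also have "\<dots> = 2 * off_mass Ad a x"
    using abs_diff_pure_state_nth[OF assms] by (simp add: off_mass_def)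
  finally show ?thesis .
qed

lemma prod_le_factor:
  fixes f :: "'a \<Rightarrow> real"
  assumes "finite S" "i \<in> S" and f01: "\<And>j. j \<in> S \<Longrightarrow> 0 \<le> f j \<and> f j \<le> 1"
  shows "prod f S \<le> f i"
proof -
  have "prod f S = f i * prod f (S - {i})"
    using assms(1,2) by (rule prod.remove)
  also have "\<dots> \<le> f i * 1"
    using f01 assms(2) by (intro mult_left_mono prod_le_1) auto
  finally show ?thesis by simp
qed

lemma prod_le_two_factors:
  fixes f :: "'a \<Rightarrow> real"
  assumes "finite S" "i \<in> S" "j \<in> S" "i \<noteq> j" and f01: "\<And>k. k \<in> S \<Longrightarrow> 0 \<le> f k \<and> f k \<le> 1"
  shows "prod f S \<le> f i * f j"
proof -
  have "prod f S = f i * prod f (S - {i})"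
    using assms(1,2) by (rule prod.remove)
  also have "\<dots> \<le> f i * f j"
    using assms f01 by (intro mult_left_mono prod_le_factor) auto
  finally show ?thesis .
qed

locale recombinator_strict_equilibrium =
  fixes Ad :: "'d::finite \<Rightarrow> 'b::finite set" and u :: "('d \<Rightarrow> 'b) \<Rightarrow> ('d \<Rightarrow> 'b) \<Rightarrow> real"
    and r :: real and a :: "'d \<Rightarrow> 'b"
  assumes payoff_pos: "\<forall>b\<in>types Ad. \<forall>c\<in>types Ad. u b c > 0"
    and r_nonneg: "0 \<le> r" and r_le_1: "r \<le> 1"
    and a_in_types [simp]: "a \<in> types Ad"
    and single_mutant_inferior: "\<forall>d. \<forall>t\<in>Ad d. t \<noteq> a d \<longrightarrow> u a a > u (a(d := t)) a"
    and invader_inferior: "\<forall>b\<in>types Ad. b \<noteq> a \<longrightarrow> u a a > (1 - r) * u b a"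
begin

abbreviation others :: "('d \<Rightarrow> 'b) set" where
  "others \<equiv> types Ad - {a}"

definition single_mutants :: "('d \<Rightarrow> 'b) set" where
  "single_mutants = {b \<in> others. \<exists>d. b = a(d := b d)}"

definition multi_mutants :: "('d \<Rightarrow> 'b) set" where
  "multi_mutants = others - single_mutants"

definition u_max :: real where
  "u_max = Max ((\<lambda>(b, c). u b c) ` (types Ad \<times> types Ad))"

definition u_min :: real where
  "u_min = Min ((\<lambda>(b, c). u b c) ` (types Ad \<times> types Ad))"

text \<open>\<open>\<beta> < 1\<close> bounds the payoff of a mutant against \<open>a\<close> relative to \<open>u a a\<close>, weighted as it enters
  the dynamics near \<open>\<delta>\<^sub>a\<close>: single mutants are also produced by recombination, while multi-trait
  mutants are reproduced only by the non-recombining fraction \<open>1 - r\<close>.\<close>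
definition \<beta> :: real where
  "\<beta> = Max ({0} \<union> (\<lambda>b. u b a / u a a) ` single_mutants
                 \<union> (\<lambda>b. (1 - r) * u b a / u a a) ` multi_mutants)"

definition \<alpha> :: real where
  "\<alpha> = (1 - \<beta>) / 2"

definition K :: real where
  "K = u_max / u_min"

definition N :: real where
  "N = real (card (types Ad))"

text \<open>The weight \<open>M\<close> of the multi-trait mutants is chosen so that their decay \<open>M \<alpha>\<close> absorbs the
  inflow \<open>N K\<close> that recombination of multi-trait mutants feeds into the single mutants.\<close>
definition M :: real where
  "M = 1 + N * K / \<alpha>"

text \<open>The first bound on the radius \<open>y\<^sub>0\<close> keeps the mean payoff so close to \<open>u a a\<close> that
  mutants lose at rate \<open>\<alpha>\<close>; the second makes the quadratic recombination term negligible.\<close>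
definition y\<^sub>0 :: real where
  "y\<^sub>0 = min (\<alpha> * u a a / (u_max + 2 * u a a)) (\<alpha> / (2 * M * N * K\<^sup>2))"

definition \<eta> :: real where
  "\<eta> = \<alpha> / (2 * M)"

definition lyap :: "real ^ ('d \<Rightarrow> 'b) \<Rightarrow> real" where
  "lyap x = (\<Sum>b\<in>single_mutants. x $ b) + M * (\<Sum>b\<in>multi_mutants. x $ b)"

lemma mutants_partition:
  "single_mutants \<subseteq> others" "multi_mutants \<subseteq> others"
  "single_mutants \<inter> multi_mutants = {}" "single_mutants \<union> multi_mutants = others"
  by (auto simp: single_mutants_def multi_mutants_def)

lemma finite_mutants [simp]: "finite single_mutants" "finite multi_mutants"
  using mutants_partition finite_subset by (metis finite_Diff finite_types)+

lemma sum_others_split: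
  "(\<Sum>b\<in>others. f b) = (\<Sum>b\<in>single_mutants. f b) + (\<Sum>b\<in>multi_mutants. f b)"
  using mutants_partition by (metis finite_mutants sum.union_disjoint)

lemma single_mutantE:
  assumes "b \<in> single_mutants"
  obtains d where "b = a(d := b d)" "b d \<noteq> a d" "b d \<in> Ad d"
proof -
  obtain d where d: "b = a(d := b d)" and b: "b \<in> types Ad" "b \<noteq> a"
    using assms by (auto simp: single_mutants_def)
  then have "b d \<noteq> a d"
    by (metis fun_upd_triv)
  with d b show thesis
    using that by (auto simp: types_def)
qed

lemma multi_mutant_two_traits:
  assumes "b \<in> multi_mutants"
  obtains d1 d2 where "d1 \<noteq> d2" "b d1 \<noteq> a d1" "b d2 \<noteq> a d2"
proof -
  have b: "b \<in> others" "b \<notin> single_mutants"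
    using assms by (auto simp: multi_mutants_def)
  then obtain d1 where d1: "b d1 \<noteq> a d1"
    by auto
  have "\<exists>d2. d2 \<noteq> d1 \<and> b d2 \<noteq> a d2"
  proof (rule ccontr)
    assume "\<nexists>d2. d2 \<noteq> d1 \<and> b d2 \<noteq> a d2"
    then have "b = a(d1 := b d1)"
      by (auto simp: fun_eq_iff)
    with b show False
      by (auto simp: single_mutants_def)
  qed
  with d1 that show thesis
    by metis
qed

lemma payoff_bounds:
  assumes "b \<in> types Ad" "c \<in> types Ad"
  shows "0 < u_min" "u_min \<le> u b c" "u b c \<le> u_max"
proof -
  let ?P = "(\<lambda>(b, c). u b c) ` (types Ad \<times> types Ad)"
  have "finite ?P" "?P \<noteq> {}"
    using assms by auto
  then have "u_min \<in> ?P"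
    unfolding u_min_def by (rule Min_in)
  then show "0 < u_min"
    using payoff_pos by auto
  show "u_min \<le> u b c" "u b c \<le> u_max"
    unfolding u_min_def u_max_def using assms \<open>finite ?P\<close> by (auto intro: Min_le Max_ge)
qed

lemma u_aa_pos: "0 < u a a"
  using payoff_pos by simp

lemma \<beta>_bounds:
  "0 \<le> \<beta>" "\<beta> < 1"
  "b \<in> single_mutants \<Longrightarrow> u b a \<le> \<beta> * u a a"
  "b \<in> multi_mutants \<Longrightarrow> (1 - r) * u b a \<le> \<beta> * u a a"
proof -
  let ?S = "{0} \<union> (\<lambda>b. u b a / u a a) ` single_mutants
              \<union> (\<lambda>b. (1 - r) * u b a / u a a) ` multi_mutants"
  have fin: "finite ?S" and uaa: "0 < u a a"
    using payoff_pos by auto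
  show "0 \<le> \<beta>"
    unfolding \<beta>_def by (rule Max_ge[OF fin]) simp
  have "s < 1" if "s \<in> ?S" for s
    using that
  proof (elim UnE imageE)
    fix b assume "b \<in> single_mutants" "s = u b a / u a a"
    from \<open>b \<in> single_mutants\<close> obtain d where "b = a(d := b d)" "b d \<noteq> a d" "b d \<in> Ad d"
      by (rule single_mutantE)
    then have "u b a < u a a"
      using single_mutant_inferior by metis
    then show "s < 1"
      using \<open>s = u b a / u a a\<close> uaa by simp
  next
    fix b assume "b \<in> multi_mutants" "s = (1 - r) * u b a / u a a"
    then have "(1 - r) * u b a < u a a"
      using invader_inferior by (auto simp: multi_mutants_def)
    then show "s < 1"
      using \<open>s = (1 - r) * u b a / u a a\<close> uaa by simp
  qed simp
  moreover have "\<beta> \<in> ?S"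
    unfolding \<beta>_def by (rule Max_in[OF fin]) simp
  ultimately show "\<beta> < 1"
    by blast
  show "u b a \<le> \<beta> * u a a" if "b \<in> single_mutants"
  proof -
    have "u b a / u a a \<le> \<beta>"
      unfolding \<beta>_def using that by (intro Max_ge[OF fin]) auto
    then show ?thesis
      using uaa by (simp add: pos_divide_le_eq)
  qed
  show "(1 - r) * u b a \<le> \<beta> * u a a" if "b \<in> multi_mutants"
  proof -
    have "(1 - r) * u b a / u a a \<le> \<beta>"
      unfolding \<beta>_def using that by (intro Max_ge[OF fin]) auto
    then show ?thesis
      using uaa by (simp add: pos_divide_le_eq)
  qed
qed

lemma constants_pos: "0 < \<alpha>" "0 < K" "1 \<le> N" "1 \<le> M" "0 < y\<^sub>0" "0 < \<eta>"
proof -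
  show "0 < \<alpha>"
    using \<beta>_bounds by (simp add: \<alpha>_def)
  show "0 < K"
    using payoff_bounds[OF a_in_types a_in_types] by (simp add: K_def)
  have "0 < card (types Ad)"
    using a_in_types by (metis card_gt_0_iff empty_iff finite_types)
  then show "1 \<le> N"
    by (simp add: N_def)
  show "1 \<le> M"
    using \<open>0 < \<alpha>\<close> \<open>0 < K\<close> \<open>1 \<le> N\<close> by (simp add: M_def)
  show "0 < y\<^sub>0"
    using \<open>0 < \<alpha>\<close> \<open>0 < K\<close> \<open>1 \<le> N\<close> \<open>1 \<le> M\<close> payoff_bounds[OF a_in_types a_in_types]
    by (simp add: y\<^sub>0_def)
  show "0 < \<eta>"
    using \<open>0 < \<alpha>\<close> \<open>1 \<le> M\<close> by (simp add: \<eta>_def)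
qed

lemma M_absorbs: "M * \<alpha> = \<alpha> + N * K"
  using constants_pos by (simp add: M_def field_simps)

lemma sum_le_drift:
  assumes "S \<subseteq> types Ad" "0 \<le> c" "\<And>b. b \<in> S \<Longrightarrow> F b \<le> - \<alpha> * x b + c"
  shows "(\<Sum>b\<in>S. F b) \<le> - \<alpha> * (\<Sum>b\<in>S. x b) + N * c"
proof -
  have "(\<Sum>b\<in>S. F b) \<le> (\<Sum>b\<in>S. - \<alpha> * x b + c)"
    using assms(3) by (rule sum_mono)
  also have "\<dots> = - \<alpha> * (\<Sum>b\<in>S. x b) + card S * c"
    by (simp add: sum_subtractf sum_distrib_left sum_negf)
  also have "card S * c \<le> N * c"
    using card_mono[OF finite_types assms(1)] assms(2) by (simp add: N_def mult_right_mono)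
  finally show ?thesis
    by simp
qed

lemma lyap_bounds:
  assumes "x \<in> state_space Ad"
  shows "off_mass Ad a x \<le> lyap x" "lyap x \<le> M * off_mass Ad a x"
proof -
  have "0 \<le> (\<Sum>b\<in>single_mutants. x $ b)" "0 \<le> (\<Sum>b\<in>multi_mutants. x $ b)"
    using state_spaceD(1)[OF assms] by (auto intro: sum_nonneg)
  then have "(\<Sum>b\<in>single_mutants. x $ b) \<le> M * (\<Sum>b\<in>single_mutants. x $ b)"
    "(\<Sum>b\<in>multi_mutants. x $ b) \<le> M * (\<Sum>b\<in>multi_mutants. x $ b)"
    using constants_pos(4) by (simp_all add: mult_le_cancel_right1)
  then show "off_mass Ad a x \<le> lyap x" "lyap x \<le> M * off_mass Ad a x"
    unfolding lyap_def off_mass_def sum_others_split by (simp_all add: distrib_left)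
qed

end

locale recombinator_near_equilibrium = recombinator_strict_equilibrium +
  fixes x
  assumes x_state: "x \<in> state_space Ad"
    and x_near: "off_mass Ad a x \<le> y\<^sub>0"
begin

abbreviation y :: real where
  "y \<equiv> off_mass Ad a x"

abbreviation m :: real where
  "m \<equiv> mean_payoff Ad u x"

abbreviation fit where
  "fit b \<equiv> x $ b * payoff_vs Ad u x b"

abbreviation trait_fit where
  "trait_fit \<equiv> trait_mass_payoff Ad u x"

lemma x_nonneg: "0 \<le> x $ b"
  using state_spaceD(1)[OF x_state] .

lemma y_nonneg: "0 \<le> y"
  using off_mass_nonneg[OF x_state] .

lemma payoff_vs_bounds:
  assumes "b \<in> types Ad"
  shows "u_min \<le> payoff_vs Ad u x b" "payoff_vs Ad u x b \<le> u_max"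
  unfolding payoff_vs_def using payoff_bounds[OF assms] x_state
  by (auto intro: state_space_average_le state_space_average_ge)

lemma payoff_vs_le_against_a:
  assumes "b \<in> types Ad"
  shows "payoff_vs Ad u x b \<le> u b a + u_max * y"
proof -
  have "payoff_vs Ad u x b = x $ a * u b a + (\<Sum>c\<in>others. x $ c * u b c)"
    unfolding payoff_vs_def by (rule sum.remove) auto
  also have "x $ a * u b a \<le> u b a"
    using state_space_mass_at[OF x_state a_in_types] y_nonneg x_nonneg payoff_bounds[OF assms a_in_types]
    by (simp add: mult_le_cancel_right1)
  also have "(\<Sum>c\<in>others. x $ c * u b c) \<le> (\<Sum>c\<in>others. x $ c * u_max)"
    using payoff_bounds[OF assms] by (intro sum_mono mult_left_mono x_nonneg) auto
  also have "\<dots> = u_max * y"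
    by (simp add: off_mass_def sum_distrib_left mult.commute)
  finally show ?thesis
    by simp
qed

lemma fit_bounds:
  assumes "b \<in> types Ad"
  shows "0 \<le> fit b" "fit b \<le> u_max * x $ b"
  using payoff_vs_bounds[OF assms] payoff_bounds(1)[OF assms assms] x_nonneg[of b]
  by (auto simp: mult.commute intro: mult_left_mono)

lemma mean_payoff_eq: "m = (\<Sum>b\<in>types Ad. fit b)"
  by (simp add: mean_payoff_def)

lemma mean_payoff_ge_u_min: "u_min \<le> m"
  unfolding mean_payoff_def using x_state payoff_vs_bounds(1)
  by (rule state_space_average_ge)

lemma mean_payoff_pos: "0 < m"
  using mean_payoff_ge_u_min payoff_bounds(1)[OF a_in_types a_in_types] by linarith

lemma mean_payoff_ge_pure: "(1 - 2 * y) * u a a \<le> m"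
proof -
  have "x $ a * u a a \<le> payoff_vs Ad u x a"
    unfolding payoff_vs_def
    by (intro member_le_sum mult_nonneg_nonneg x_nonneg) (use payoff_pos in \<open>auto simp: less_imp_le\<close>)
  then have "(1 - y) * ((1 - y) * u a a) \<le> fit a"
    using state_space_mass_at[OF x_state a_in_types] x_nonneg[of a] by (simp add: mult_left_mono)
  also have "fit a \<le> m"
    unfolding mean_payoff_eq using fit_bounds(1) by (intro member_le_sum) auto
  finally have "(1 - y)\<^sup>2 * u a a \<le> m"
    by (simp add: power2_eq_square mult.assoc)
  moreover have "(1 - 2 * y) * u a a \<le> (1 - y)\<^sup>2 * u a a"
    using u_aa_pos by (intro mult_right_mono) (auto simp: power2_eq_square algebra_simps)
  ultimately show ?thesis
    by linarith
qed

lemma mutant_growth_le: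
  assumes "b \<in> types Ad" "0 \<le> c" "c \<le> 1" "c * u b a \<le> \<beta> * u a a"
  shows "c * fit b / m \<le> (1 - \<alpha>) * x $ b"
proof -
  have umax: "0 < u_max"
    using payoff_bounds[OF a_in_types a_in_types] by auto
  have y_small: "y * (u_max + 2 * u a a) \<le> \<alpha> * u a a"
    using x_near u_aa_pos umax by (simp add: y\<^sub>0_def pos_le_divide_eq)
  have "c * payoff_vs Ad u x b \<le> c * (u b a + u_max * y)"
    using payoff_vs_le_against_a[OF assms(1)] assms(2) by (rule mult_left_mono)
  also have "\<dots> \<le> \<beta> * u a a + u_max * y"
  proof -
    have "c * (u_max * y) \<le> u_max * y"
      using mult_right_mono[OF assms(3), of "u_max * y"] umax y_nonneg by simp
    then show ?thesis
      using assms(4) by (simp add: distrib_left)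
  qed
  also have "\<dots> \<le> (1 - \<alpha>) * ((1 - 2 * y) * u a a)"
  proof -
    have "0 \<le> \<alpha> * y * u a a"
      using constants_pos(1) y_nonneg u_aa_pos by simp
    moreover have "\<beta> = 1 - 2 * \<alpha>"
      by (simp add: \<alpha>_def field_simps)
    ultimately show ?thesis
      using y_small by (simp only:) (simp add: algebra_simps)
  qed
  also have "\<dots> \<le> (1 - \<alpha>) * m"
    using mean_payoff_ge_pure \<beta>_bounds(1) by (intro mult_left_mono) (auto simp: \<alpha>_def)
  finally have "x $ b * (c * payoff_vs Ad u x b) \<le> x $ b * ((1 - \<alpha>) * m)"
    using x_nonneg by (intro mult_left_mono)
  then have "c * fit b \<le> (1 - \<alpha>) * x $ b * m"
    by (simp add: algebra_simps)
  then show ?thesis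
    using mean_payoff_pos by (simp add: pos_divide_le_eq)
qed

lemma trait_fit_eq: "trait_fit d t = (\<Sum>b\<in>{b \<in> types Ad. b d = t}. fit b)"
  by (simp add: trait_mass_payoff_def)

lemma trait_share_bounds: "0 \<le> trait_fit d t / m" "trait_fit d t / m \<le> 1"
proof -
  have "0 \<le> trait_fit d t"
    unfolding trait_fit_eq using fit_bounds(1) by (intro sum_nonneg) auto
  moreover have "trait_fit d t \<le> m"
    unfolding trait_fit_eq mean_payoff_eq using fit_bounds(1) by (intro sum_mono2) auto
  ultimately show "0 \<le> trait_fit d t / m" "trait_fit d t / m \<le> 1"
    using mean_payoff_pos by auto
qed

lemma trait_fit_le_mutants:
  assumes "t \<noteq> a d"
  shows "trait_fit d t \<le> (\<Sum>b\<in>others. fit b)"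
  unfolding trait_fit_eq using assms fit_bounds(1) by (intro sum_mono2) auto

text \<open>A trait of a single mutant \<open>b\<close> is carried, apart from \<open>b\<close> itself, only by multi-trait
  mutants.\<close>
lemma trait_fit_single_mutant_le:
  assumes b: "b \<in> single_mutants" and "b d \<noteq> a d"
  shows "trait_fit d (b d) \<le> fit b + (\<Sum>c\<in>multi_mutants. fit c)"
proof -
  have "{c \<in> types Ad. c d = b d} \<subseteq> insert b multi_mutants"
  proof
    fix c assume c: "c \<in> {c \<in> types Ad. c d = b d}"
    show "c \<in> insert b multi_mutants"
    proof (cases "c \<in> single_mutants")
      case True
      obtain d' where c': "c = a(d' := c d')"
        using True by (rule single_mutantE)
      obtain d'' where b': "b = a(d'' := b d'')"
        using b by (rule single_mutantE)
      have "c d = b d"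
        using c by simp
      then have "d' = d" "d'' = d"
        using c' b' \<open>b d \<noteq> a d\<close> by (metis fun_upd_other)+
      then show ?thesis
        using c' b' \<open>c d = b d\<close> by simp
    next
      case False
      then show ?thesis
        using c \<open>b d \<noteq> a d\<close> by (auto simp: multi_mutants_def)
    qed
  qed
  moreover have "insert b multi_mutants \<subseteq> types Ad"
    using b mutants_partition by auto
  ultimately have "trait_fit d (b d) \<le> (\<Sum>c\<in>insert b multi_mutants. fit c)"
    unfolding trait_fit_eq using fit_bounds(1) by (intro sum_mono2) auto
  also have "\<dots> = fit b + (\<Sum>c\<in>multi_mutants. fit c)"
    using b by (simp add: multi_mutants_def)
  finally show ?thesis .
qed

lemma fit_share_le:
  assumes "S \<subseteq> types Ad"
  shows "(\<Sum>b\<in>S. fit b) / m \<le> K * (\<Sum>b\<in>S. x $ b)"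
proof -
  have u_min: "0 < u_min" "u_min \<le> m"
    using payoff_bounds(1)[OF a_in_types a_in_types] mean_payoff_ge_u_min by auto
  have "0 \<le> (\<Sum>b\<in>S. fit b)"
    using assms fit_bounds(1) by (intro sum_nonneg) auto
  then have "(\<Sum>b\<in>S. fit b) / m \<le> (\<Sum>b\<in>S. fit b) / u_min"
    using u_min by (intro divide_left_mono) auto
  also have "\<dots> \<le> (\<Sum>b\<in>S. u_max * x $ b) / u_min"
    using assms fit_bounds(2) u_min by (intro divide_right_mono sum_mono) auto
  also have "\<dots> = K * (\<Sum>b\<in>S. x $ b)"
    by (simp add: K_def sum_distrib_left[symmetric])
  finally show ?thesis .
qed

lemma recomb_field_nth:
  "recomb_field Ad u r x $ b = (1 - r) * fit b / m + r * (\<Prod>d\<in>UNIV. trait_fit d (b d) / m) - x $ b"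
  by (simp add: recomb_field_def)

lemma recomb_field_single_mutant_le:
  assumes b: "b \<in> single_mutants"
  shows "recomb_field Ad u r x $ b \<le> - \<alpha> * x $ b + K * (\<Sum>c\<in>multi_mutants. x $ c)"
proof -
  obtain d where "b d \<noteq> a d"
    using b by (rule single_mutantE)
  have bT: "b \<in> types Ad"
    using b mutants_partition by auto
  let ?G = "(\<Sum>c\<in>multi_mutants. fit c)"
  have "(\<Prod>d\<in>UNIV. trait_fit d (b d) / m) \<le> trait_fit d (b d) / m"
    using trait_share_bounds by (intro prod_le_factor) auto
  also have "\<dots> \<le> (fit b + ?G) / m"
    using trait_fit_single_mutant_le[OF b \<open>b d \<noteq> a d\<close>] mean_payoff_pos
    by (intro divide_right_mono) auto
  finally have "r * (\<Prod>d\<in>UNIV. trait_fit d (b d) / m) \<le> r * ((fit b + ?G) / m)"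
    using r_nonneg by (rule mult_left_mono)
  moreover have "(1 - r) * fit b / m + r * ((fit b + ?G) / m) = fit b / m + r * (?G / m)"
    using mean_payoff_pos by (simp add: field_simps)
  moreover have "r * (?G / m) \<le> ?G / m"
    using r_nonneg r_le_1 mean_payoff_pos fit_bounds(1) mutants_partition
    by (intro mult_left_le_one_le divide_nonneg_pos sum_nonneg) auto
  moreover have "?G / m \<le> K * (\<Sum>c\<in>multi_mutants. x $ c)"
    using mutants_partition by (intro fit_share_le) auto
  moreover have "fit b / m \<le> (1 - \<alpha>) * x $ b"
    using mutant_growth_le[of b 1] bT \<beta>_bounds(3)[OF b] by simp
  ultimately show ?thesis
    unfolding recomb_field_nth by (simp add: algebra_simps)
qed

text \<open>A multi-trait mutant needs two foreign traits to meet in recombination, which happens at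
  a rate quadratic in \<open>y\<close>.\<close>
lemma recomb_field_multi_mutant_le:
  assumes b: "b \<in> multi_mutants"
  shows "recomb_field Ad u r x $ b \<le> - \<alpha> * x $ b + K\<^sup>2 * y\<^sup>2"
proof -
  obtain d1 d2 where "d1 \<noteq> d2" "b d1 \<noteq> a d1" "b d2 \<noteq> a d2"
    using b by (rule multi_mutant_two_traits)
  have bT: "b \<in> types Ad"
    using b mutants_partition by auto
  have foreign: "trait_fit d (b d) / m \<le> K * y" if "b d \<noteq> a d" for d
  proof -
    have "trait_fit d (b d) / m \<le> (\<Sum>c\<in>others. fit c) / m"
      using trait_fit_le_mutants[OF that] mean_payoff_pos by (simp add: divide_right_mono)
    also have "\<dots> \<le> K * y"
      unfolding off_mass_def by (rule fit_share_le) auto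
    finally show ?thesis .
  qed
  have "(\<Prod>d\<in>UNIV. trait_fit d (b d) / m) \<le> trait_fit d1 (b d1) / m * (trait_fit d2 (b d2) / m)"
    using trait_share_bounds \<open>d1 \<noteq> d2\<close> by (intro prod_le_two_factors) auto
  also have "\<dots> \<le> (K * y) * (K * y)"
    using foreign \<open>b d1 \<noteq> a d1\<close> \<open>b d2 \<noteq> a d2\<close> trait_share_bounds constants_pos(2) y_nonneg
    by (intro mult_mono) auto
  also have "\<dots> = K\<^sup>2 * y\<^sup>2"
    by (simp add: power2_eq_square)
  finally have "r * (\<Prod>d\<in>UNIV. trait_fit d (b d) / m) \<le> K\<^sup>2 * y\<^sup>2"
    using r_nonneg r_le_1 trait_share_bounds
    by (meson mult_left_le_one_le order_trans prod_nonneg)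
  moreover have "(1 - r) * fit b / m \<le> (1 - \<alpha>) * x $ b"
    using mutant_growth_le[of b "1 - r"] bT r_nonneg r_le_1 \<beta>_bounds(4)[OF b] by simp
  ultimately show ?thesis
    unfolding recomb_field_nth by (simp add: algebra_simps)
qed

lemma lyap_recomb_field_le: "lyap (recomb_field Ad u r x) \<le> - \<eta> * lyap x"
proof -
  let ?F = "recomb_field Ad u r x"
  define y1 where "y1 = (\<Sum>b\<in>single_mutants. x $ b)"
  define y2 where "y2 = (\<Sum>b\<in>multi_mutants. x $ b)"
  have "(\<Sum>b\<in>single_mutants. ?F $ b) \<le> - \<alpha> * y1 + N * (K * y2)"
    unfolding y1_def
  proof (rule sum_le_drift)
    show "0 \<le> K * y2"
      unfolding y2_def using constants_pos(2) x_nonneg by (simp add: sum_nonneg)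
  qed (use mutants_partition recomb_field_single_mutant_le in \<open>auto simp: y2_def\<close>)
  moreover have "(\<Sum>b\<in>multi_mutants. ?F $ b) \<le> - \<alpha> * y2 + N * (K\<^sup>2 * y\<^sup>2)"
    unfolding y2_def
    by (rule sum_le_drift) (use mutants_partition recomb_field_multi_mutant_le in auto)
  then have "M * (\<Sum>b\<in>multi_mutants. ?F $ b) \<le> M * (- \<alpha> * y2 + N * (K\<^sup>2 * y\<^sup>2))"
    using constants_pos(4) by (intro mult_left_mono) auto
  ultimately have "lyap ?F \<le> - \<alpha> * y1 + N * K * y2 - M * \<alpha> * y2 + M * N * K\<^sup>2 * y\<^sup>2"
    unfolding lyap_def by (simp add: algebra_simps)
  also have "\<dots> = - \<alpha> * y + M * N * K\<^sup>2 * y\<^sup>2"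
  proof -
    have "M * \<alpha> * y2 = \<alpha> * y2 + N * K * y2"
      using M_absorbs by (metis distrib_right)
    moreover have "\<alpha> * y = \<alpha> * y1 + \<alpha> * y2"
      unfolding off_mass_def y1_def y2_def sum_others_split by (simp add: distrib_left)
    ultimately show ?thesis
      by linarith
  qed
  also have "\<dots> \<le> - \<alpha> * y + \<alpha> / 2 * y"
  proof -
    have "y \<le> \<alpha> / (2 * M * N * K\<^sup>2)"
      using x_near by (simp add: y\<^sub>0_def)
    then have "M * N * K\<^sup>2 * y \<le> \<alpha> / 2"
      using constants_pos by (simp add: pos_le_divide_eq algebra_simps)
    then have "M * N * K\<^sup>2 * y * y \<le> \<alpha> / 2 * y"
      using y_nonneg by (rule mult_right_mono)
    moreover have "M * N * K\<^sup>2 * y\<^sup>2 = M * N * K\<^sup>2 * y * y"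
      by (simp add: power2_eq_square)
    ultimately show ?thesis
      by linarith
  qed
  also have "\<dots> = - \<eta> * (M * y)"
    using constants_pos by (simp add: \<eta>_def)
  also have "\<dots> \<le> - \<eta> * lyap x"
    using lyap_bounds(2)[OF x_state] constants_pos(6) by simp
  finally show ?thesis .
qed

end

context recombinator_strict_equilibrium
begin

lemma bounded_linear_lyap: "bounded_linear lyap"
  unfolding lyap_def[abs_def]
  by (intro bounded_linear_add bounded_linear_sum bounded_linear_vec_nth
      bounded_linear_compose[OF bounded_linear_mult_right])

lemma lyap_exponential_decay:
  assumes X: "trajectory Ad u r X" and "lyap (X 0) < y\<^sub>0" "0 \<le> t"
  shows "lyap (X t) \<le> lyap (X 0) * exp (- \<eta> * t)"
proof -
  have state: "X s \<in> state_space Ad" if "0 \<le> s" for s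
    using X that by (auto simp: trajectory_def)
  have deriv: "((\<lambda>t. lyap (X t)) has_real_derivative lyap (recomb_field Ad u r (X s))) (at s within {0..})"
    if "0 \<le> s" for s
  proof -
    have "(X has_vector_derivative recomb_field Ad u r (X s)) (at s within {0..})"
      using X that by (auto simp: trajectory_def)
    from bounded_linear.has_vector_derivative[OF bounded_linear_lyap this] show ?thesis
      by (simp add: has_real_derivative_iff_has_vector_derivative o_def)
  qed
  have nonneg: "0 \<le> lyap (X s)" if "0 \<le> s" for s
    using lyap_bounds(1)[OF state[OF that]] off_mass_nonneg[OF state[OF that], of a] by linarith
  have decay: "lyap (recomb_field Ad u r (X s)) \<le> - \<eta> * lyap (X s)"
    if "0 \<le> s" "lyap (X s) < y\<^sub>0" for s
  proof -
    interpret recombinator_near_equilibrium Ad u r a "X s"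
      using state[OF that(1)] lyap_bounds(1)[OF state[OF that(1)]] that(2)
      by unfold_locales auto
    show ?thesis
      by (rule lyap_recomb_field_le)
  qed
  show ?thesis
    using exponential_decay_below_threshold[OF deriv nonneg decay] assms constants_pos by auto
qed

theorem asymptotically_stable_pure_state: "asymptotically_stable Ad u r (pure_state a)"
proof -
  interpret exponential_lyapunov_function Ad u r "pure_state a" lyap "2 * M" y\<^sub>0 \<eta>
  proof unfold_locales
    fix x assume x: "x \<in> state_space Ad"
    have "dist x (pure_state a) \<le> 2 * lyap x"
      using dist_pure_state_le_off_mass[OF x a_in_types] lyap_bounds(1)[OF x] by linarith
    also have "\<dots> \<le> 2 * M * lyap x"
      using lyap_bounds(1)[OF x] off_mass_nonneg[OF x, of a] constants_pos(4)
      by (simp add: mult_le_cancel_right1)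
    finally have "dist x (pure_state a) \<le> 2 * M * lyap x" .
    moreover have "lyap x \<le> M * dist x (pure_state a)"
      using lyap_bounds(2)[OF x] off_mass_le_dist_pure_state[OF x a_in_types] constants_pos(4)
      by (meson mult_left_mono order_trans zero_le_one)
    moreover have "0 \<le> M * dist x (pure_state a)"
      using constants_pos(4) by simp
    ultimately show "dist x (pure_state a) \<le> 2 * M * lyap x \<and> lyap x \<le> 2 * M * dist x (pure_state a)"
      by linarith
  qed (use lyap_exponential_decay constants_pos in auto)
  show ?thesis
    by (rule asymptotically_stable)
qed

end

theorem corollary2:
  fixes Ad :: "'d::finite \<Rightarrow> 'b::finite set"
    and u :: "('d \<Rightarrow> 'b) \<Rightarrow> ('d \<Rightarrow> 'b) \<Rightarrow> real"
    and r :: real and a :: "'d \<Rightarrow> 'b"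
  assumes "CARD('d) \<ge> 2"
    and "\<forall>b\<in>types Ad. \<forall>b'\<in>types Ad. u b b' > 0"
    and "0 \<le> r" and "r \<le> 1"
    and "a \<in> types Ad"
    and "stationary Ad u r (pure_state a)"
    and "\<forall>d. \<forall>t\<in>Ad d. t \<noteq> a d \<longrightarrow> u a a > u (a(d := t)) a"
    and "\<forall>a'\<in>types Ad. a' \<noteq> a \<longrightarrow> u a a > (1 - r) * u a' a"
  shows "asymptotically_stable Ad u r (pure_state a)"
proof -
  interpret recombinator_strict_equilibrium Ad u r a
    using assms by unfold_locales auto
  show ?thesis
    by (rule asymptotically_stable_pure_state)
qed

end
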